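(* Let $\varPhi\subset\mathbb{E}^3$ be a skew ruled surface with invariants $\delta,\kappa,\lambda$, right normalized with support function $q=\frac{f(u)+g(u)v}{w}$, neither $f$ nor $g$ the zero function, and let $\overline{T}$ be its Tchebychev vector field. Then: (a) $\overline{T}$ is tangential to the $\widetilde{K}$-curves of $\varPhi$ if and only if $\varPhi$ is conoidal with constant distribution parameter $\delta=c_1\neq0$, $g$ is a nonvanishing constant $c_2$, and $f=c_1c_2\int\lambda\,\mathrm{d}u+c_3$, $c_3\in\mathbb{R}$; (b) $\overline{T}$ is orthogonal to the $\widetilde{K}$-curves of $\varPhi$ if and only if $\varPhi$ is an Edlinger surface and $g$ and $f$ are nonvanishing constants $c_1$ and $c_2$, respectively.
   Context: $\varPhi$ is a ruled $C^r$-surface ($r\ge3$) with nonvanishing Gaussian curvature, in standard parameters $\overline{x}(u,v)=\overline{s}(u)+v\,\overline{e}(u)$, $|\overline{e}|=|\overline{e}'|=1$, $\langle\overline{s}',\overline{e}'\rangle=0$. Frame $\overline{n}=\overline{e}'$, $\overline{z}=\overline{e}\times\overline{n}$. Invariants: distribution parameter $\delta=(\overline{s}',\overline{e},\overline{e}')\neq0$, conical curvature $\kappa=(\overline{e},\overline{e}',\overline{e}'')$, $\lambda=\cot\sphericalangle(\overline{e},\overline{s}')$, $\overline{s}'=\delta\lambda\overline{e}+\delta\overline{z}$. Conoidal means $\kappa\equiv0$. An Edlinger surface is a ruled surface whose osculating quadrics are rotational hyperboloids, characterized by $\delta'=\kappa\lambda+1=0$. $w=\sqrt{\delta^2+v^2}$,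 $\overline{\xi}=(\delta\overline{n}-v\overline{z})/w$, Gaussian curvature $\widetilde{K}=-\delta^2/w^4$. The $\widetilde{K}$-curves are the curves along which $\widetilde{K}$ is constant, i.e. curves $v=v(u)$ with $2\delta vv'+\delta'(\delta^2-v^2)=0$. $h_{11}=-(\kappa w^2+\delta'v-\delta^2\lambda)/w$, $h_{12}=\delta/w$, $h_{22}=0$. A relative normalization is determined by its support function $q=\langle\overline{\xi},\overline{y}\rangle\neq0$; right normalization: $q=(f+gv)/w$, $f,g$ functions of $u$. Relative metric $G_{ij}=q^{-1}h_{ij}$, Darboux tensor $A_{ijk}=q^{-1}\langle\overline{\xi},\nabla^G_k\nabla^G_j\overline{x}_{/i}\rangle$, Tchebychev vector $\overline{T}=T^m\overline{x}_{/m}$, $T^m=\frac12A_i^{\ im}$; equivalently $T^1=\frac{w^2q_{/2}+vq}{\delta w}$, $T^2=\frac{2\delta w^2q_{/1}+\delta'q(\delta^2-v^2)}{2\delta^2w}+\frac{T^1(\kappa w^2+\delta'v-\delta^2\lambda)}{\delta}$. "Tangential/orthogonal to a family of curves" means at every point $\overline{T}$ is parallel/orthogonal to the tangent of the curve of the family through that point. $\int\cdots\mathrm{d}u$ denotes an antiderivative. *)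

theory Defs
  imports "HOL-Analysis.Analysis"
begin

text \<open>Ruled surface x(u,v) = s(u) + v e(u) in standard parameters.
  s1 = s', e1 = e', e2 = e'' are given explicitly as derivative functions.\<close>

definition triple :: "real^3 \<Rightarrow> real^3 \<Rightarrow> real^3 \<Rightarrow> real" where
  "triple a b c = a \<bullet> cross3 b c"

definition dpar :: "(real \<Rightarrow> real^3) \<Rightarrow> (real \<Rightarrow> real^3) \<Rightarrow> (real \<Rightarrow> real^3) \<Rightarrow> real \<Rightarrow> real" where
  "dpar s1 e e1 u = triple (s1 u) (e u) (e1 u)"

definition ccurv :: "(real \<Rightarrow> real^3) \<Rightarrow> (real \<Rightarrow> real^3) \<Rightarrow> (real \<Rightarrow> real^3) \<Rightarrow> real \<Rightarrow> real" where
  "ccurv e e1 e2 u = triple (e u) (e1 u) (e2 u)"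

text \<open>lambda, determined by s' = delta lambda e + delta z\<close>
definition lam :: "(real \<Rightarrow> real^3) \<Rightarrow> (real \<Rightarrow> real^3) \<Rightarrow> (real \<Rightarrow> real^3) \<Rightarrow> real \<Rightarrow> real" where
  "lam s1 e e1 u = (s1 u \<bullet> e u) / dpar s1 e e1 u"

definition wfun :: "(real \<Rightarrow> real) \<Rightarrow> real \<Rightarrow> real \<Rightarrow> real" where
  "wfun d u v = sqrt ((d u)^2 + v^2)"

definition suppq :: "(real \<Rightarrow> real) \<Rightarrow> (real \<Rightarrow> real) \<Rightarrow> (real \<Rightarrow> real) \<Rightarrow> real \<Rightarrow> real \<Rightarrow> real" where
  "suppq f g d u v = (f u + g u * v) / wfun d u v"

definition tch1 :: "(real \<Rightarrow> real \<Rightarrow> real) \<Rightarrow> (real \<Rightarrow> real) \<Rightarrow> real \<Rightarrow> real \<Rightarrow> real" where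
  "tch1 q d u v =
     ((wfun d u v)^2 * deriv (\<lambda>t. q u t) v + v * q u v) / (d u * wfun d u v)"

definition tch2 :: "(real \<Rightarrow> real \<Rightarrow> real) \<Rightarrow> (real \<Rightarrow> real) \<Rightarrow> (real \<Rightarrow> real) \<Rightarrow> (real \<Rightarrow> real)
     \<Rightarrow> real \<Rightarrow> real \<Rightarrow> real" where
  "tch2 q d k l u v =
     (2 * d u * (wfun d u v)^2 * deriv (\<lambda>t. q t v) u + deriv d u * q u v * ((d u)^2 - v^2))
       / (2 * (d u)^2 * wfun d u v)
     + tch1 q d u v * (k u * (wfun d u v)^2 + deriv d u * v - (d u)^2 * l u) / d u"

text \<open>Tchebychev vector T = T^1 x_u + T^2 x_v of the surface with the right
  normalization q = (f + g v)/w, where x_u = s' + v e', x_v = e.\<close>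
definition tchvec :: "(real \<Rightarrow> real^3) \<Rightarrow> (real \<Rightarrow> real^3) \<Rightarrow> (real \<Rightarrow> real^3) \<Rightarrow> (real \<Rightarrow> real^3)
     \<Rightarrow> (real \<Rightarrow> real) \<Rightarrow> (real \<Rightarrow> real) \<Rightarrow> real \<Rightarrow> real \<Rightarrow> real^3" where
  "tchvec s1 e e1 e2 f g u v =
     (let d = dpar s1 e e1; q = suppq f g d in
      tch1 q d u v *\<^sub>R (s1 u + v *\<^sub>R e1 u)
      + tch2 q d (ccurv e e1 e2) (lam s1 e e1) u v *\<^sub>R e u)"

text \<open>Tangent vector of the K-curve through (u,v): the direction (du,dv) annihilated by
  2 delta v dv + delta' (delta^2 - v^2) du = 0, i.e. (du,dv) = (2 delta v, -delta'(delta^2-v^2)),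
  mapped to the surface: 2 delta v x_u - delta'(delta^2 - v^2) x_v.\<close>
definition kcurve_tan :: "(real \<Rightarrow> real^3) \<Rightarrow> (real \<Rightarrow> real^3) \<Rightarrow> (real \<Rightarrow> real^3)
     \<Rightarrow> real \<Rightarrow> real \<Rightarrow> real^3" where
  "kcurve_tan s1 e e1 u v =
     (let d = dpar s1 e e1 in
      (2 * d u * v) *\<^sub>R (s1 u + v *\<^sub>R e1 u)
      - (deriv d u * ((d u)^2 - v^2)) *\<^sub>R e u)"

definition conoidal :: "(real \<Rightarrow> real^3) \<Rightarrow> (real \<Rightarrow> real^3) \<Rightarrow> (real \<Rightarrow> real^3) \<Rightarrow> real set \<Rightarrow> bool" where
  "conoidal e e1 e2 I \<longleftrightarrow> (\<forall>u\<in>I. ccurv e e1 e2 u = 0)"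

definition edlinger :: "(real \<Rightarrow> real^3) \<Rightarrow> (real \<Rightarrow> real^3) \<Rightarrow> (real \<Rightarrow> real^3) \<Rightarrow> (real \<Rightarrow> real^3)
     \<Rightarrow> real set \<Rightarrow> bool" where
  "edlinger s1 e e1 e2 I \<longleftrightarrow>
     (\<forall>u\<in>I. deriv (dpar s1 e e1) u = 0 \<and> ccurv e e1 e2 u * lam s1 e e1 u + 1 = 0)"

end

(* Write the Tchebychev vector and the tangent of the K-curve through (u,v) in the tangent
   basis x_u = s' + v e', x_v = e: T = (g/delta) x_u + T^2 e with T^2 quadratic in v, and
   t = 2 delta v x_u - delta' (delta^2 - v^2) e.  Along the ruling u, T x t resp. <T, t> is then
   a cubic resp. quartic polynomial in v, times a nonvanishing factor, with coefficients built
   from delta, delta', f, f', g, g', kappa, lambda.  As the condition holds for all v off the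
   single root of f + g v, all coefficients vanish wherever g <> 0.  This forces g' = 0 there, so
   g is a nonzero constant on the interval, and the remaining coefficient equations become
   delta' = 0, kappa = 0, f' = g delta lambda resp. delta' = 0, kappa lambda + 1 = 0, f' = 0. *)

theory Submission
  imports Defs "HOL-Computational_Algebra.Polynomial"
begin

lemma poly_eq_0_iff_zero_off_line:
  fixes p :: "'a::field_char_0 poly"
  assumes "b \<noteq> 0"
  shows "(\<forall>x. a + b * x \<noteq> 0 \<longrightarrow> poly p x = 0) \<longleftrightarrow> p = 0"
proof
  assume zero: "\<forall>x. a + b * x \<noteq> 0 \<longrightarrow> poly p x = 0"
  show "p = 0"
  proof (rule ccontr)
    assume "p \<noteq> 0"
    then have "finite (insert (- a / b) {x. poly p x = 0})"
      using poly_roots_finite by blast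
    moreover have "a + b * x \<noteq> 0" if "x \<noteq> - a / b" for x
      using that assms by (auto simp: field_simps eq_neg_iff_add_eq_0 add.commute)
    then have "UNIV \<subseteq> insert (- a / b) {x. poly p x = 0}"
      using zero by auto
    ultimately show False
      using infinite_UNIV_char_0 finite_subset by blast
  qed
qed simp

lemma deriv_eq_0_iff_constant_on_interval:
  fixes h :: "real \<Rightarrow> real"
  assumes "is_interval I" "open I" "\<And>u. u \<in> I \<Longrightarrow> h differentiable (at u)"
  shows "(\<forall>u\<in>I. deriv h u = 0) \<longleftrightarrow> (\<exists>c. \<forall>u\<in>I. h u = c)"
proof
  assume "\<forall>u\<in>I. deriv h u = 0"
  then have "(h has_field_derivative 0) (at u within I)" if "u \<in> I" for u
    using assms(3)[OF that] that
    by (metis DERIV_deriv_iff_real_differentiable has_field_derivative_at_within)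
  then show "\<exists>c. \<forall>u\<in>I. h u = c"
    using has_field_derivative_zero_constant is_interval_convex assms(1) by blast
next
  assume "\<exists>c. \<forall>u\<in>I. h u = c"
  then obtain c where c: "\<forall>u\<in>I. h u = c" ..
  have "(h has_real_derivative 0) (at u)" if "u \<in> I" for u
    by (rule has_field_derivative_transform_within_open[OF DERIV_const[of c] assms(2) that])
      (simp add: c)
  then show "\<forall>u\<in>I. deriv h u = 0"
    using DERIV_imp_deriv by blast
qed

lemma constant_if_deriv_eq_0_where_nonzero:
  fixes g :: "real \<Rightarrow> real"
  assumes I: "is_interval I" "open I"
    and diff: "\<And>u. u \<in> I \<Longrightarrow> g differentiable (at u)"
    and deriv0: "\<And>u. u \<in> I \<Longrightarrow> g u \<noteq> 0 \<Longrightarrow> deriv g u = 0"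
  shows "\<exists>c. \<forall>u\<in>I. g u = c"
proof -
  \<comment> \<open>\<open>(g\<^sup>2)' = 2 g g'\<close> vanishes everywhere, so \<open>g\<close> vanishes either identically or nowhere.\<close>
  have sq_diff: "(\<lambda>t. (g t)\<^sup>2) differentiable (at u)" if "u \<in> I" for u
    using diff[OF that] by (simp add: power2_eq_square)
  have "deriv (\<lambda>t. (g t)\<^sup>2) u = 0" if u: "u \<in> I" for u
  proof -
    have "((\<lambda>t. (g t)\<^sup>2) has_real_derivative 2 * g u * deriv g u) (at u)"
      using diff[OF u] DERIV_deriv_iff_real_differentiable
      by (auto intro!: derivative_eq_intros)
    then have "deriv (\<lambda>t. (g t)\<^sup>2) u = 2 * g u * deriv g u"
      by (rule DERIV_imp_deriv)
    then show ?thesis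
      using deriv0[OF u] by auto
  qed
  then obtain c where c: "\<forall>u\<in>I. (g u)\<^sup>2 = c"
    using deriv_eq_0_iff_constant_on_interval[OF I sq_diff] by blast
  show ?thesis
  proof (cases "\<exists>u\<in>I. g u = 0")
    case True
    then have "c = 0"
      using c by force
    then show ?thesis
      using c by (intro exI[of _ 0]) simp
  next
    case False
    then show ?thesis
      using deriv_eq_0_iff_constant_on_interval[OF I diff] deriv0 by blast
  qed
qed

lemma deriv_eq_scaled_iff_primitive:
  fixes f \<phi> :: "real \<Rightarrow> real"
  assumes "open I" "c \<noteq> 0" "\<And>u. u \<in> I \<Longrightarrow> f differentiable (at u)"
  shows "(\<forall>u\<in>I. deriv f u = c * \<phi> u) \<longleftrightarrow>
    (\<exists>F c'. (\<forall>u\<in>I. (F has_real_derivative \<phi> u) (at u)) \<and> (\<forall>u\<in>I. f u = c * F u + c'))"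
proof
  assume f': "\<forall>u\<in>I. deriv f u = c * \<phi> u"
  have "((\<lambda>t. f t / c) has_real_derivative \<phi> u) (at u)" if "u \<in> I" for u
    using assms(3)[OF that] f' that \<open>c \<noteq> 0\<close> DERIV_deriv_iff_real_differentiable
    by (auto intro!: derivative_eq_intros)
  then show "\<exists>F c'. (\<forall>u\<in>I. (F has_real_derivative \<phi> u) (at u)) \<and> (\<forall>u\<in>I. f u = c * F u + c')"
    using \<open>c \<noteq> 0\<close> by (intro exI[of _ "\<lambda>t. f t / c"] exI[of _ 0]) auto
next
  assume "\<exists>F c'. (\<forall>u\<in>I. (F has_real_derivative \<phi> u) (at u)) \<and> (\<forall>u\<in>I. f u = c * F u + c')"
  then obtain F c' where F: "\<forall>u\<in>I. (F has_real_derivative \<phi> u) (at u)"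
    and f: "\<forall>u\<in>I. f u = c * F u + c'" by blast
  have "(f has_real_derivative c * \<phi> u) (at u)" if u: "u \<in> I" for u
  proof (rule has_field_derivative_transform_within_open[OF _ assms(1) u])
    show "((\<lambda>t. c * F t + c') has_real_derivative c * \<phi> u) (at u)"
      using F u by (auto intro!: derivative_eq_intros)
  qed (simp add: f)
  then show "\<forall>u\<in>I. deriv f u = c * \<phi> u"
    using DERIV_imp_deriv by blast
qed

lemma inner_derivative_eq_0_if_norm_constant:
  fixes e :: "real \<Rightarrow> 'a::real_inner"
  assumes "open I" "u \<in> I" "(e has_vector_derivative e') (at u)"
    and "\<And>t. t \<in> I \<Longrightarrow> norm (e t) = r"
  shows "e u \<bullet> e' = 0"
proof -
  have "((\<lambda>t. e t \<bullet> e t) has_vector_derivative (e u \<bullet> e' + e' \<bullet> e u)) (at u)"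
    by (rule bounded_bilinear.has_vector_derivative[OF bounded_bilinear_inner assms(3,3)])
  then have "((\<lambda>t. e t \<bullet> e t) has_real_derivative 2 * (e u \<bullet> e')) (at u)"
    by (simp add: has_real_derivative_iff_has_vector_derivative inner_commute)
  moreover have "((\<lambda>t. e t \<bullet> e t) has_real_derivative 0) (at u)"
    by (rule has_field_derivative_transform_within_open[OF DERIV_const[of "r\<^sup>2"] assms(1,2)])
      (simp add: assms(4) flip: power2_norm_eq_inner)
  ultimately show ?thesis
    using DERIV_unique by fastforce
qed

lemma inner_self_in_orthonormal_frame:
  fixes s e n :: "real^3"
  assumes "norm e = 1" "norm n = 1" "e \<bullet> n = 0" "s \<bullet> n = 0"
  shows "s \<bullet> s = (s \<bullet> e)\<^sup>2 + (s \<bullet> cross3 e n)\<^sup>2"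
proof -
  have "(norm (cross3 s e))\<^sup>2 = (norm s)\<^sup>2 - (s \<bullet> e)\<^sup>2"
    using norm_cross[of s e] assms(1) by simp
  moreover have "cross3 n (cross3 s e) = 0"
    using Lagrange[of n s e] assms by (simp add: inner_commute)
  then have "(norm (cross3 s e))\<^sup>2 = (n \<bullet> cross3 s e)\<^sup>2"
    using norm_cross[of n "cross3 s e"] assms(2) by simp
  moreover have "n \<bullet> cross3 s e = s \<bullet> cross3 e n"
    using cross_triple[of s e n] by (simp add: inner_commute)
  ultimately show ?thesis
    by (simp add: power2_norm_eq_inner)
qed

lemma tch1_suppq:
  assumes "d u \<noteq> 0"
  shows "tch1 (suppq f g d) d u v = g u / d u"
proof -
  let ?w = "wfun d u v"
  have pos: "(d u)\<^sup>2 + v\<^sup>2 > 0"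
    using assms by (simp add: add_pos_nonneg)
  then have w: "?w > 0"
    by (simp add: wfun_def)
  have "((\<lambda>t. (f u + g u * t) / sqrt ((d u)\<^sup>2 + t\<^sup>2)) has_real_derivative
      (g u * ?w - (f u + g u * v) * (inverse ?w / 2 * (2 * v))) / ?w\<^sup>2) (at v)"
    using pos unfolding wfun_def by (auto intro!: derivative_eq_intros simp: power2_eq_square)
  then have "deriv (\<lambda>t. suppq f g d u t) v =
      (g u * ?w - (f u + g u * v) * (inverse ?w / 2 * (2 * v))) / ?w\<^sup>2"
    unfolding suppq_def wfun_def by (rule DERIV_imp_deriv)
  also have "\<dots> = (g u * ?w\<^sup>2 - (f u + g u * v) * v) / ?w ^ 3"
    using w by (simp add: field_simps power2_eq_square power3_eq_cube)
  finally have qv: "deriv (\<lambda>t. suppq f g d u t) v = \<dots>" .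
  show ?thesis
    unfolding tch1_def qv using w assms
    by (simp add: suppq_def field_simps power2_eq_square power3_eq_cube)
qed

text \<open>In the scalar lemmas below, \<open>D, D', F, F', G, G', K, L\<close> stand for the values of
  \<open>\<delta>, \<delta>', f, f', g, g', \<kappa>, \<lambda>\<close> at a fixed parameter \<open>u\<close>.\<close>

definition right_tch2 :: "real \<Rightarrow> real \<Rightarrow> real \<Rightarrow> real \<Rightarrow> real \<Rightarrow> real \<Rightarrow> real \<Rightarrow> real \<Rightarrow> real \<Rightarrow> real"
  where "right_tch2 D D' F F' G G' K L v =
    (F' + G' * v) / D - D' * (F + G * v) / (2 * D\<^sup>2) + G * (K * (D\<^sup>2 + v\<^sup>2) + D' * v - D\<^sup>2 * L) / D\<^sup>2"

lemma tch2_suppq: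
  assumes "d u \<noteq> 0" "(d has_real_derivative d') (at u)"
    "(f has_real_derivative f') (at u)" "(g has_real_derivative g') (at u)"
  shows "tch2 (suppq f g d) d k l u v = right_tch2 (d u) d' (f u) f' (g u) g' (k u) (l u) v"
proof -
  let ?w = "wfun d u v"
  have pos: "(d u)\<^sup>2 + v\<^sup>2 > 0"
    using assms by (simp add: add_pos_nonneg)
  then have w: "?w > 0" "?w\<^sup>2 = (d u)\<^sup>2 + v\<^sup>2"
    by (simp_all add: wfun_def)
  have "((\<lambda>t. (f t + g t * v) / sqrt ((d t)\<^sup>2 + v\<^sup>2)) has_real_derivative
      ((f' + g' * v) * ?w - (f u + g u * v) * (inverse ?w / 2 * (2 * d u * d'))) / ?w\<^sup>2) (at u)"
    using pos assms unfolding wfun_def by (auto intro!: derivative_eq_intros simp: power2_eq_square)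
  then have "deriv (\<lambda>t. suppq f g d t v) u =
      ((f' + g' * v) * ?w - (f u + g u * v) * (inverse ?w / 2 * (2 * d u * d'))) / ?w\<^sup>2"
    unfolding suppq_def wfun_def by (rule DERIV_imp_deriv)
  also have "\<dots> = (f' + g' * v) / ?w - (f u + g u * v) * d u * d' / ?w ^ 3"
    using w(1) by (simp add: field_simps power2_eq_square power3_eq_cube)
  finally have qu: "deriv (\<lambda>t. suppq f g d t v) u = \<dots>" .
  show ?thesis
    unfolding tch2_def qu tch1_suppq[of d u, OF assms(1)] DERIV_imp_deriv[OF assms(2)]
    using w assms(1) unfolding suppq_def right_tch2_def by (simp add: field_simps) algebra
qed

lemma cross3_plane_combination:
  fixes x y :: "real^3"
  shows "cross3 (a *\<^sub>R x + b *\<^sub>R y) (c *\<^sub>R x + d *\<^sub>R y) = (a * d - b * c) *\<^sub>R cross3 x y"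
  by (simp add: cross_add_left cross_add_right cross_mult_left cross_mult_right
      cross_skew[of y x] algebra_simps)

lemma inner_plane_combination:
  fixes x y :: "'a::real_inner"
  shows "(a *\<^sub>R x + b *\<^sub>R y) \<bullet> (c *\<^sub>R x + d *\<^sub>R y) =
    a * c * (x \<bullet> x) + (a * d + b * c) * (x \<bullet> y) + b * d * (y \<bullet> y)"
  by (simp add: inner_add_left inner_add_right inner_commute[of y x] algebra_simps)

definition tangency_poly :: "real \<Rightarrow> real \<Rightarrow> real \<Rightarrow> real \<Rightarrow> real \<Rightarrow> real \<Rightarrow> real \<Rightarrow> real \<Rightarrow> real poly"
  where "tangency_poly D D' F F' G G' K L =
    [:G * D' * D\<^sup>2, 2 * D * F' - D' * F + 2 * G * D\<^sup>2 * (K - L), 2 * D * G', 2 * G * K:]"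

definition orthogonality_poly :: "real \<Rightarrow> real \<Rightarrow> real \<Rightarrow> real \<Rightarrow> real \<Rightarrow> real \<Rightarrow> real \<Rightarrow> real \<Rightarrow> real poly"
  where "orthogonality_poly D D' F F' G G' K L =
    (let P = 2 * D * F' - D' * F + 2 * G * D\<^sup>2 * (K - L); H = 2 * D * G' + G * D' in
     [:- D' * D\<^sup>2 * (2 * D\<^sup>2 * G * L + P),
       4 * D ^ 4 * G * (L\<^sup>2 + 1) - D' * D\<^sup>2 * H + 2 * D\<^sup>2 * L * P,
       2 * D\<^sup>2 * D' * G * (L - K) + 2 * D\<^sup>2 * L * H + D' * P,
       4 * D\<^sup>2 * G * (1 + K * L) + D' * H,
       2 * G * K * D':])"

lemma tangency_identity:
  assumes "D \<noteq> 0"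
  shows "G / D * (- D' * (D\<^sup>2 - v\<^sup>2)) - right_tch2 D D' F F' G G' K L v * (2 * D * v) =
    - poly (tangency_poly D D' F F' G G' K L) v / D"
  using assms unfolding right_tch2_def tangency_poly_def by (simp add: field_simps) algebra

lemma orthogonality_identity:
  assumes "D \<noteq> 0"
  shows "G / D * (2 * D * v) * ((D * L)\<^sup>2 + D\<^sup>2 + v\<^sup>2)
      + (G / D * (- D' * (D\<^sup>2 - v\<^sup>2)) + right_tch2 D D' F F' G G' K L v * (2 * D * v)) * (D * L)
      + right_tch2 D D' F F' G G' K L v * (- D' * (D\<^sup>2 - v\<^sup>2)) =
    poly (orthogonality_poly D D' F F' G G' K L) v / (2 * D\<^sup>2)"
  using assms unfolding right_tch2_def orthogonality_poly_def Let_def by (simp add: field_simps) algebra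

lemma tangency_poly_eq_0_iff:
  assumes "D \<noteq> 0" "G \<noteq> 0"
  shows "tangency_poly D D' F F' G G' K L = 0 \<longleftrightarrow> G' = 0 \<and> D' = 0 \<and> K = 0 \<and> F' = G * D * L"
  using assms by (auto simp: tangency_poly_def power2_eq_square)

lemma orthogonality_poly_eq_0_iff:
  assumes D: "D \<noteq> 0" and G: "G \<noteq> 0"
  shows "orthogonality_poly D D' F F' G G' K L = 0 \<longleftrightarrow> G' = 0 \<and> D' = 0 \<and> K * L + 1 = 0 \<and> F' = 0"
proof -
  define P where "P = 2 * D * F' - D' * F + 2 * G * D\<^sup>2 * (K - L)"
  define H where "H = 2 * D * G' + G * D'"
  have "orthogonality_poly D D' F F' G G' K L = 0 \<longleftrightarrow>
      D' * D\<^sup>2 * (2 * D\<^sup>2 * G * L + P) = 0 \<and>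
      4 * D ^ 4 * G * (L\<^sup>2 + 1) - D' * D\<^sup>2 * H + 2 * D\<^sup>2 * L * P = 0 \<and>
      2 * D\<^sup>2 * D' * G * (L - K) + 2 * D\<^sup>2 * L * H + D' * P = 0 \<and>
      4 * D\<^sup>2 * G * (1 + K * L) + D' * H = 0 \<and> G * K * D' = 0"
    unfolding orthogonality_poly_def P_def H_def Let_def by auto
  also have "\<dots> \<longleftrightarrow> G' = 0 \<and> D' = 0 \<and> K * L + 1 = 0 \<and> F' = 0" (is "?coeffs \<longleftrightarrow> _")
  proof
    assume c: ?coeffs
    have D': "D' = 0"
    proof (rule ccontr)
      assume "D' \<noteq> 0"
      then have K: "K = 0"
        using c G by simp
      have P: "P = - (2 * D\<^sup>2 * G * L)"
        using c D \<open>D' \<noteq> 0\<close> by (simp add: eq_neg_iff_add_eq_0 add.commute)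
      have H: "D' * H = - (4 * D\<^sup>2 * G)"
        using c K by (simp add: eq_neg_iff_add_eq_0 add.commute)
      have "4 * D ^ 4 * G * (L\<^sup>2 + 1) - D\<^sup>2 * (D' * H) + 2 * D\<^sup>2 * L * P = 0"
        using c by (simp add: ac_simps)
      then have "8 * D ^ 4 * G = 0"
        unfolding P H by (simp add: algebra_simps power2_eq_square power4_eq_xxxx)
      then show False
        using D G by simp
    qed
    then have KL: "K * L + 1 = 0"
      using c D G by (simp add: add.commute)
    then have "L \<noteq> 0"
      by auto
    then have G': "G' = 0"
      using c D' D by (simp add: H_def)
    have "4 * D ^ 3 * L * F' + 4 * D ^ 4 * G * (K * L + 1) =
        4 * D ^ 4 * G * (L\<^sup>2 + 1) - D' * D\<^sup>2 * H + 2 * D\<^sup>2 * L * P"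
      unfolding P_def D' by algebra
    also have "\<dots> = 0"
      using c by simp
    finally have "4 * D ^ 3 * L * F' + 4 * D ^ 4 * G * (K * L + 1) = 0" .
    then have "F' = 0"
      using KL \<open>L \<noteq> 0\<close> D by simp
    then show "G' = 0 \<and> D' = 0 \<and> K * L + 1 = 0 \<and> F' = 0"
      using D' G' KL by simp
  next
    assume "G' = 0 \<and> D' = 0 \<and> K * L + 1 = 0 \<and> F' = 0"
    then have D': "D' = 0" and G': "G' = 0" and KL: "1 + K * L = 0" and F': "F' = 0"
      by auto
    have "4 * D ^ 4 * G * (L\<^sup>2 + 1) - D' * D\<^sup>2 * H + 2 * D\<^sup>2 * L * P = 4 * D ^ 4 * G * (1 + K * L)"
      unfolding P_def H_def D' G' F' by algebra
    then show ?coeffs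
      unfolding KL using D' G' unfolding P_def H_def by simp
  qed
  finally show ?thesis .
qed

locale right_normalized_skew_ruled_surface =
  fixes I :: "real set" and s1 e e1 e2 :: "real \<Rightarrow> real^3" and f g :: "real \<Rightarrow> real"
  assumes open_I: "open I" and interval_I: "is_interval I"
    and s1_differentiable: "\<And>u. u \<in> I \<Longrightarrow> s1 differentiable (at u)"
    and e_deriv: "\<And>u. u \<in> I \<Longrightarrow> (e has_vector_derivative e1 u) (at u)"
    and e1_deriv: "\<And>u. u \<in> I \<Longrightarrow> (e1 has_vector_derivative e2 u) (at u)"
    and standard: "\<And>u. u \<in> I \<Longrightarrow> norm (e u) = 1 \<and> norm (e1 u) = 1 \<and> s1 u \<bullet> e1 u = 0"
    and skew: "\<And>u. u \<in> I \<Longrightarrow> dpar s1 e e1 u \<noteq> 0"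
    and f_differentiable: "\<And>u. u \<in> I \<Longrightarrow> f differentiable (at u)"
    and g_differentiable: "\<And>u. u \<in> I \<Longrightarrow> g differentiable (at u)"
    and g_nonzero: "\<exists>u\<in>I. g u \<noteq> 0"
begin

abbreviation \<delta> where "\<delta> \<equiv> dpar s1 e e1"
abbreviation \<kappa> where "\<kappa> \<equiv> ccurv e e1 e2"

lemma dpar_differentiable: "u \<in> I \<Longrightarrow> \<delta> differentiable (at u)"
proof -
  assume u: "u \<in> I"
  have "((\<lambda>t. cross3 (e t) (e1 t)) has_vector_derivative
      cross3 (e u) (e2 u) + cross3 (e1 u) (e1 u)) (at u)"
    using bilinear_cross bilinear_conv_bounded_bilinear e_deriv[OF u] e1_deriv[OF u]
    by (blast intro: bounded_bilinear.has_vector_derivative)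
  then have "(\<lambda>t. s1 t \<bullet> cross3 (e t) (e1 t)) differentiable (at u)"
    using s1_differentiable[OF u] differentiable_inner differentiableI_vector by blast
  then show ?thesis
    by (simp add: dpar_def[abs_def] triple_def)
qed

lemma e_orthogonal_e1: "u \<in> I \<Longrightarrow> e u \<bullet> e1 u = 0"
  using inner_derivative_eq_0_if_norm_constant[OF open_I _ e_deriv] standard by blast

lemma tangents_cross_nonzero: "u \<in> I \<Longrightarrow> cross3 (s1 u + v *\<^sub>R e1 u) (e u) \<noteq> 0"
proof
  assume u: "u \<in> I" and "cross3 (s1 u + v *\<^sub>R e1 u) (e u) = 0"
  then have "cross3 (s1 u) (e u) \<bullet> e1 u = 0"
    by (metis (no_types) cross_add_left cross_mult_left dot_cross_self(4) inner_add_left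
        inner_scaleR_left mult_zero_right add_0_right inner_zero_left)
  then show False
    using skew[OF u] cross_triple[of "s1 u" "e u" "e1 u"]
    by (simp add: dpar_def triple_def inner_commute)
qed

lemma first_fundamental_form:
  assumes u: "u \<in> I"
  shows "(s1 u + v *\<^sub>R e1 u) \<bullet> (s1 u + v *\<^sub>R e1 u) = (\<delta> u * lam s1 e e1 u)\<^sup>2 + (\<delta> u)\<^sup>2 + v\<^sup>2"
    and "(s1 u + v *\<^sub>R e1 u) \<bullet> e u = \<delta> u * lam s1 e e1 u"
    and "e u \<bullet> e u = 1"
proof -
  have norms: "norm (e u) = 1" "norm (e1 u) = 1" and s1_e1: "s1 u \<bullet> e1 u = 0"
    using standard[OF u] by auto
  have s1_e: "s1 u \<bullet> e u = \<delta> u * lam s1 e e1 u"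
    using skew[OF u] by (simp add: lam_def)
  have "s1 u \<bullet> s1 u = (\<delta> u * lam s1 e e1 u)\<^sup>2 + (\<delta> u)\<^sup>2"
    using inner_self_in_orthonormal_frame[OF norms e_orthogonal_e1[OF u] s1_e1] s1_e
    by (simp add: dpar_def triple_def)
  moreover have "e1 u \<bullet> e1 u = 1"
    using norms by (simp flip: power2_norm_eq_inner)
  ultimately show "(s1 u + v *\<^sub>R e1 u) \<bullet> (s1 u + v *\<^sub>R e1 u) = (\<delta> u * lam s1 e e1 u)\<^sup>2 + (\<delta> u)\<^sup>2 + v\<^sup>2"
    using s1_e1 by (simp add: inner_add_left inner_add_right inner_commute[of "e1 u" "s1 u"] power2_eq_square)
  show "(s1 u + v *\<^sub>R e1 u) \<bullet> e u = \<delta> u * lam s1 e e1 u"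
    using s1_e e_orthogonal_e1[OF u] by (simp add: inner_add_left inner_commute[of "e1 u" "e u"])
  show "e u \<bullet> e u = 1"
    using norms by (simp flip: power2_norm_eq_inner)
qed

lemma tchvec_in_tangent_basis:
  assumes u: "u \<in> I"
  shows "tchvec s1 e e1 e2 f g u v = (g u / \<delta> u) *\<^sub>R (s1 u + v *\<^sub>R e1 u) +
    right_tch2 (\<delta> u) (deriv \<delta> u) (f u) (deriv f u) (g u) (deriv g u) (\<kappa> u) (lam s1 e e1 u) v *\<^sub>R e u"
proof -
  have "(\<delta> has_real_derivative deriv \<delta> u) (at u)" "(f has_real_derivative deriv f u) (at u)"
    "(g has_real_derivative deriv g u) (at u)"
    using dpar_differentiable[OF u] f_differentiable[OF u] g_differentiable[OF u]
    by (simp_all add: DERIV_deriv_iff_real_differentiable)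
  then show ?thesis
    unfolding tchvec_def Let_def tch1_suppq[of \<delta>, OF skew[OF u]]
    by (simp add: tch2_suppq[of \<delta> u, OF skew[OF u]])
qed

lemma kcurve_tan_in_tangent_basis:
  "kcurve_tan s1 e e1 u v =
    (2 * \<delta> u * v) *\<^sub>R (s1 u + v *\<^sub>R e1 u) + (- deriv \<delta> u * ((\<delta> u)\<^sup>2 - v\<^sup>2)) *\<^sub>R e u"
  by (simp add: kcurve_tan_def Let_def)

lemma tangential_on_ruling_iff:
  assumes u: "u \<in> I" and g: "g u \<noteq> 0"
  shows "(\<forall>v. f u + g u * v \<noteq> 0 \<longrightarrow>
      cross3 (tchvec s1 e e1 e2 f g u v) (kcurve_tan s1 e e1 u v) = 0) \<longleftrightarrow>
    deriv g u = 0 \<and> deriv \<delta> u = 0 \<and> \<kappa> u = 0 \<and> deriv f u = g u * \<delta> u * lam s1 e e1 u"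
proof -
  let ?p = "tangency_poly (\<delta> u) (deriv \<delta> u) (f u) (deriv f u) (g u) (deriv g u) (\<kappa> u) (lam s1 e e1 u)"
  have "cross3 (tchvec s1 e e1 e2 f g u v) (kcurve_tan s1 e e1 u v) =
      (- poly ?p v / \<delta> u) *\<^sub>R cross3 (s1 u + v *\<^sub>R e1 u) (e u)" for v
    unfolding tchvec_in_tangent_basis[OF u] kcurve_tan_in_tangent_basis cross3_plane_combination
    by (simp only: tangency_identity[OF skew[OF u]])
  then have "(\<forall>v. f u + g u * v \<noteq> 0 \<longrightarrow>
      cross3 (tchvec s1 e e1 e2 f g u v) (kcurve_tan s1 e e1 u v) = 0) \<longleftrightarrow> ?p = 0"
    using tangents_cross_nonzero[OF u] skew[OF u] poly_eq_0_iff_zero_off_line[OF g] by simp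
  then show ?thesis
    using tangency_poly_eq_0_iff[OF skew[OF u] g] by simp
qed

lemma orthogonal_on_ruling_iff:
  assumes u: "u \<in> I" and g: "g u \<noteq> 0"
  shows "(\<forall>v. f u + g u * v \<noteq> 0 \<longrightarrow>
      tchvec s1 e e1 e2 f g u v \<bullet> kcurve_tan s1 e e1 u v = 0) \<longleftrightarrow>
    deriv g u = 0 \<and> deriv \<delta> u = 0 \<and> \<kappa> u * lam s1 e e1 u + 1 = 0 \<and> deriv f u = 0"
proof -
  let ?p = "orthogonality_poly (\<delta> u) (deriv \<delta> u) (f u) (deriv f u) (g u) (deriv g u) (\<kappa> u) (lam s1 e e1 u)"
  have "tchvec s1 e e1 e2 f g u v \<bullet> kcurve_tan s1 e e1 u v = poly ?p v / (2 * (\<delta> u)\<^sup>2)" for v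
    unfolding tchvec_in_tangent_basis[OF u] kcurve_tan_in_tangent_basis inner_plane_combination
      first_fundamental_form[OF u] mult_1_right
    by (simp only: orthogonality_identity[OF skew[OF u]])
  then have "(\<forall>v. f u + g u * v \<noteq> 0 \<longrightarrow>
      tchvec s1 e e1 e2 f g u v \<bullet> kcurve_tan s1 e e1 u v = 0) \<longleftrightarrow> ?p = 0"
    using skew[OF u] poly_eq_0_iff_zero_off_line[OF g] by simp
  then show ?thesis
    using orthogonality_poly_eq_0_iff[OF skew[OF u] g] by simp
qed

lemma ruling_conditions_iff_g_constant:
  assumes on_ruling: "\<And>u. u \<in> I \<Longrightarrow> g u \<noteq> 0 \<Longrightarrow> P u \<longleftrightarrow> deriv g u = 0 \<and> Q u"
  shows "(\<forall>u\<in>I. P u) \<longleftrightarrow> (\<exists>c. c \<noteq> 0 \<and> (\<forall>u\<in>I. g u = c)) \<and> (\<forall>u\<in>I. Q u)"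
proof
  assume P: "\<forall>u\<in>I. P u"
  then have "\<exists>c. \<forall>u\<in>I. g u = c"
    using constant_if_deriv_eq_0_where_nonzero[OF interval_I open_I g_differentiable] on_ruling
    by blast
  then obtain c where "c \<noteq> 0" "\<forall>u\<in>I. g u = c"
    using g_nonzero by force
  then show "(\<exists>c. c \<noteq> 0 \<and> (\<forall>u\<in>I. g u = c)) \<and> (\<forall>u\<in>I. Q u)"
    using P on_ruling by auto
next
  assume "(\<exists>c. c \<noteq> 0 \<and> (\<forall>u\<in>I. g u = c)) \<and> (\<forall>u\<in>I. Q u)"
  moreover from this have "\<forall>u\<in>I. deriv g u = 0"
    using deriv_eq_0_iff_constant_on_interval[OF interval_I open_I g_differentiable] by blast
  ultimately show "\<forall>u\<in>I. P u"
    using on_ruling by auto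
qed

lemma dpar_deriv_eq_0_iff_constant:
  "(\<forall>u\<in>I. deriv \<delta> u = 0) \<longleftrightarrow> (\<exists>c. c \<noteq> 0 \<and> (\<forall>u\<in>I. \<delta> u = c))"
proof -
  obtain u0 where "u0 \<in> I"
    using g_nonzero by blast
  then have "c \<noteq> 0" if "\<forall>u\<in>I. \<delta> u = c" for c
    using that skew by blast
  then show ?thesis
    using deriv_eq_0_iff_constant_on_interval[OF interval_I open_I dpar_differentiable] by blast
qed

lemma tangential_to_kcurves_iff:
  "(\<forall>u\<in>I. \<forall>v. f u + g u * v \<noteq> 0 \<longrightarrow>
      cross3 (tchvec s1 e e1 e2 f g u v) (kcurve_tan s1 e e1 u v) = 0) \<longleftrightarrow>
    conoidal e e1 e2 I
    \<and> (\<exists>c1. c1 \<noteq> 0 \<and> (\<forall>u\<in>I. \<delta> u = c1)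
      \<and> (\<exists>c2. c2 \<noteq> 0 \<and> (\<forall>u\<in>I. g u = c2)
        \<and> (\<exists>F c3. (\<forall>u\<in>I. (F has_real_derivative lam s1 e e1 u) (at u))
                 \<and> (\<forall>u\<in>I. f u = c1 * c2 * F u + c3))))"
  (is "?tangential \<longleftrightarrow> ?rhs")
proof -
  have "?tangential \<longleftrightarrow> (\<exists>c. c \<noteq> 0 \<and> (\<forall>u\<in>I. g u = c)) \<and>
      (\<forall>u\<in>I. deriv \<delta> u = 0 \<and> \<kappa> u = 0 \<and> deriv f u = g u * \<delta> u * lam s1 e e1 u)"
    (is "_ \<longleftrightarrow> ?invariants")
    by (rule ruling_conditions_iff_g_constant[OF tangential_on_ruling_iff])
  also have "?invariants \<longleftrightarrow> ?rhs"
  proof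
    assume ?invariants
    then obtain c2 where c2: "c2 \<noteq> 0" "\<forall>u\<in>I. g u = c2"
      and inv: "\<forall>u\<in>I. deriv \<delta> u = 0 \<and> \<kappa> u = 0 \<and> deriv f u = g u * \<delta> u * lam s1 e e1 u"
      by blast
    moreover obtain c1 where c1: "c1 \<noteq> 0" "\<forall>u\<in>I. \<delta> u = c1"
      using inv dpar_deriv_eq_0_iff_constant by blast
    moreover have "\<forall>u\<in>I. deriv f u = c1 * c2 * lam s1 e e1 u"
      using inv c1 c2 by (simp add: mult.commute)
    then have "\<exists>F c3. (\<forall>u\<in>I. (F has_real_derivative lam s1 e e1 u) (at u))
        \<and> (\<forall>u\<in>I. f u = c1 * c2 * F u + c3)"
      using deriv_eq_scaled_iff_primitive[OF open_I _ f_differentiable] c1 c2 by simp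
    ultimately show ?rhs
      unfolding conoidal_def by blast
  next
    assume ?rhs
    then obtain c1 c2 F c3 where conoidal: "\<forall>u\<in>I. \<kappa> u = 0"
      and c1: "c1 \<noteq> 0" "\<forall>u\<in>I. \<delta> u = c1" and c2: "c2 \<noteq> 0" "\<forall>u\<in>I. g u = c2"
      and F: "\<forall>u\<in>I. (F has_real_derivative lam s1 e e1 u) (at u)"
      and f: "\<forall>u\<in>I. f u = c1 * c2 * F u + c3"
      unfolding conoidal_def by blast
    have "\<forall>u\<in>I. deriv f u = c1 * c2 * lam s1 e e1 u"
      using deriv_eq_scaled_iff_primitive[OF open_I _ f_differentiable] c1 c2 F f by auto
    moreover have "\<forall>u\<in>I. deriv \<delta> u = 0"
      using dpar_deriv_eq_0_iff_constant c1 by blast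
    ultimately show ?invariants
      using conoidal c1 c2 by (auto simp: mult.commute)
  qed
  finally show ?thesis .
qed

lemma orthogonal_to_kcurves_iff:
  assumes f_nonzero: "\<exists>u\<in>I. f u \<noteq> 0"
  shows "(\<forall>u\<in>I. \<forall>v. f u + g u * v \<noteq> 0 \<longrightarrow>
      tchvec s1 e e1 e2 f g u v \<bullet> kcurve_tan s1 e e1 u v = 0) \<longleftrightarrow>
    edlinger s1 e e1 e2 I
    \<and> (\<exists>c1. c1 \<noteq> 0 \<and> (\<forall>u\<in>I. g u = c1))
    \<and> (\<exists>c2. c2 \<noteq> 0 \<and> (\<forall>u\<in>I. f u = c2))"
  (is "?orthogonal \<longleftrightarrow> _")
proof -
  have "c \<noteq> 0" if "\<forall>u\<in>I. f u = c" for c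
    using that f_nonzero by blast
  then have f_constant: "(\<forall>u\<in>I. deriv f u = 0) \<longleftrightarrow> (\<exists>c. c \<noteq> 0 \<and> (\<forall>u\<in>I. f u = c))"
    using deriv_eq_0_iff_constant_on_interval[OF interval_I open_I f_differentiable] by blast
  have "?orthogonal \<longleftrightarrow> (\<exists>c. c \<noteq> 0 \<and> (\<forall>u\<in>I. g u = c)) \<and>
      (\<forall>u\<in>I. deriv \<delta> u = 0 \<and> \<kappa> u * lam s1 e e1 u + 1 = 0 \<and> deriv f u = 0)"
    by (rule ruling_conditions_iff_g_constant[OF orthogonal_on_ruling_iff])
  then show ?thesis
    unfolding edlinger_def ball_conj_distrib f_constant by blast
qed

end

theorem proposition7:
  fixes s s1 s2 s3 e e1 e2 e3 :: "real \<Rightarrow> real^3"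
    and f g :: "real \<Rightarrow> real" and I :: "real set"
  assumes I: "open I" "is_interval I"
    and s_d: "\<And>u. u \<in> I \<Longrightarrow> (s has_vector_derivative s1 u) (at u)"
    and s1_d: "\<And>u. u \<in> I \<Longrightarrow> (s1 has_vector_derivative s2 u) (at u)"
    and s2_d: "\<And>u. u \<in> I \<Longrightarrow> (s2 has_vector_derivative s3 u) (at u)"
    and s3_c: "continuous_on I s3"
    and e_d: "\<And>u. u \<in> I \<Longrightarrow> (e has_vector_derivative e1 u) (at u)"
    and e1_d: "\<And>u. u \<in> I \<Longrightarrow> (e1 has_vector_derivative e2 u) (at u)"
    and e2_d: "\<And>u. u \<in> I \<Longrightarrow> (e2 has_vector_derivative e3 u) (at u)"
    and e3_c: "continuous_on I e3"
    and std: "\<And>u. u \<in> I \<Longrightarrow> norm (e u) = 1 \<and> norm (e1 u) = 1 \<and> s1 u \<bullet> e1 u = 0"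
    and skew: "\<And>u. u \<in> I \<Longrightarrow> dpar s1 e e1 u \<noteq> 0"
    and f_d: "\<And>u. u \<in> I \<Longrightarrow> f differentiable (at u)"
    and g_d: "\<And>u. u \<in> I \<Longrightarrow> g differentiable (at u)"
    and f_nz: "\<exists>u\<in>I. f u \<noteq> 0"
    and g_nz: "\<exists>u\<in>I. g u \<noteq> 0"
  shows
    "((\<forall>u\<in>I. \<forall>v. f u + g u * v \<noteq> 0 \<longrightarrow>
          cross3 (tchvec s1 e e1 e2 f g u v) (kcurve_tan s1 e e1 u v) = 0)
      \<longleftrightarrow>
      (conoidal e e1 e2 I
       \<and> (\<exists>c1. c1 \<noteq> 0 \<and> (\<forall>u\<in>I. dpar s1 e e1 u = c1)
         \<and> (\<exists>c2. c2 \<noteq> 0 \<and> (\<forall>u\<in>I. g u = c2)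
           \<and> (\<exists>F c3. (\<forall>u\<in>I. (F has_real_derivative lam s1 e e1 u) (at u))
                    \<and> (\<forall>u\<in>I. f u = c1 * c2 * F u + c3))))))
     \<and>
     ((\<forall>u\<in>I. \<forall>v. f u + g u * v \<noteq> 0 \<longrightarrow>
          tchvec s1 e e1 e2 f g u v \<bullet> kcurve_tan s1 e e1 u v = 0)
      \<longleftrightarrow>
      (edlinger s1 e e1 e2 I
       \<and> (\<exists>c1. c1 \<noteq> 0 \<and> (\<forall>u\<in>I. g u = c1))
       \<and> (\<exists>c2. c2 \<noteq> 0 \<and> (\<forall>u\<in>I. f u = c2))))"
proof -
  interpret right_normalized_skew_ruled_surface I s1 e e1 e2 f g
  proof
    show "\<And>u. u \<in> I \<Longrightarrow> s1 differentiable (at u)"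
      using s1_d differentiableI_vector by blast
  qed (use I e_d e1_d std skew f_d g_d g_nz in auto)
  show ?thesis
    using tangential_to_kcurves_iff orthogonal_to_kcurves_iff[OF f_nz] by blast
qed

end
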